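(* If $\mu$ satisfies $\mathrm{IC}(1)$, then $\int e^{2\Lambda^*_{\overline{\mu}}(x/2)}\,d\mu(x)\int e^{-\Lambda^*_{\overline{\mu}}(x)}\,d\mu(x)\le 1$.
   Context: A pair $(\mu,W)$, with $\mu$ a probability measure on $\mathbb{R}^n$ and $W:\mathbb{R}^n\to[0,\infty]$, satisfies property $(\tau)$ if for every bounded function $f$, $\int e^{h}\,d\mu\int e^{-f}\,d\mu\le 1$, where $h(x)=\inf_{y}\{W(x-y)+f(y)\}$ is the infimum convolution of $W$ and $f$. For a measure $\mu$, $\mu'$ is its reflection through the origin, $\overline{\mu}=\mu*\mu'$, $\Lambda_\mu=\ln\int e^{\langle \cdot,y\rangle}d\mu(y)$, and $\Lambda^*_\mu(x)=\sup_y\{\langle x,y\rangle-\Lambda_\mu(y)\}$. A probability measure $\mu$ satisfies $\mathrm{IC}(\beta)$ ($\beta>0$) if the pair $(\mu,\Lambda^*_{\overline{\mu}}(\cdot/\beta))$ satisfies property $(\tau)$. *)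

theory Defs
  imports "HOL-Probability.Probability"
begin

definition ennexp :: "ereal \<Rightarrow> ennreal" where
  "ennexp t = (case t of ereal r \<Rightarrow> ennreal (exp r) | PInfty \<Rightarrow> \<infinity> | MInfty \<Rightarrow> 0)"

definition reflect_measure :: "'a::euclidean_space measure \<Rightarrow> 'a measure" where
  "reflect_measure M = distr M borel uminus"

definition conv_measure :: "'a::euclidean_space measure \<Rightarrow> 'a measure \<Rightarrow> 'a measure" where
  "conv_measure M N = distr (M \<Otimes>\<^sub>M N) borel (\<lambda>(x, y). x + y)"

definition symm_measure :: "'a::euclidean_space measure \<Rightarrow> 'a measure" where
  "symm_measure M = conv_measure M (reflect_measure M)"

definition log_laplace :: "'a::euclidean_space measure \<Rightarrow> 'a \<Rightarrow> ereal" where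
  "log_laplace M y =
     (let I = (\<integral>\<^sup>+ x. ennreal (exp (inner y x)) \<partial>M)
      in if I = \<infinity> then \<infinity> else ereal (ln (enn2real I)))"

definition cramer :: "'a::euclidean_space measure \<Rightarrow> 'a \<Rightarrow> ereal" where
  "cramer M x = (SUP y. ereal (inner x y) - log_laplace M y)"

definition inf_conv :: "('a::euclidean_space \<Rightarrow> ereal) \<Rightarrow> ('a \<Rightarrow> real) \<Rightarrow> 'a \<Rightarrow> ereal" where
  "inf_conv W f x = (INF y. W (x - y) + ereal (f y))"

definition property_tau :: "'a::euclidean_space measure \<Rightarrow> ('a \<Rightarrow> ereal) \<Rightarrow> bool" where
  "property_tau M W \<longleftrightarrow>
     (\<forall>f :: 'a \<Rightarrow> real. f \<in> borel_measurable borel \<longrightarrow> bounded (range f) \<longrightarrow>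
        (\<integral>\<^sup>+ x. ennexp (inf_conv W f x) \<partial>M) * (\<integral>\<^sup>+ x. ennreal (exp (- f x)) \<partial>M) \<le> 1)"

definition IC :: "real \<Rightarrow> 'a::euclidean_space measure \<Rightarrow> bool" where
  "IC \<beta> M \<longleftrightarrow> property_tau M (\<lambda>x. cramer (symm_measure M) (x /\<^sub>R \<beta>))"

end

theory Submission
  imports Defs
begin

text \<open>Apply property (\<tau>) with \<open>f\<close> the cost \<open>W\<close> itself (the Cramer transform of the
  symmetrized measure), truncated at level \<open>n\<close> so that it is bounded. Since \<open>W\<close> is convex
  and nonnegative, writing \<open>x = (x - y) + y\<close>
  gives \<open>W (x - y) + W y \<ge> 2 W (x/2)\<close>, so the infimum convolution of \<open>W\<close> with its
  truncation dominates \<open>2 W (x/2)\<close> truncated at \<open>n\<close>. Monotone convergence in \<open>n\<close> then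
  removes the truncation.\<close>

lemma ennexp_ereal [simp]: "ennexp (ereal r) = ennreal (exp r)"
  by (simp add: ennexp_def)

lemma ennexp_mono: "a \<le> b \<Longrightarrow> ennexp a \<le> ennexp b"
  by (cases a; cases b) (auto simp: ennexp_def ennreal_leI)

lemma borel_measurable_ennexp [measurable]: "ennexp \<in> borel_measurable borel"
proof -
  have eq: "ennexp = (\<lambda>t. if t = \<infinity> then \<infinity> else if t = - \<infinity> then 0
                      else ennreal (exp (real_of_ereal t)))"
    by (rule ext, case_tac t) (auto simp: ennexp_def)
  show ?thesis unfolding eq by measurable
qed

lemma SUP_ennexp_min_nat: "(SUP n::nat. ennexp (min a (ereal (real n)))) = ennexp a"
proof (rule antisym)
  show "(SUP n::nat. ennexp (min a (ereal (real n)))) \<le> ennexp a"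
    by (rule SUP_least) (intro ennexp_mono, simp)
next
  show "ennexp a \<le> (SUP n::nat. ennexp (min a (ereal (real n))))"
  proof (cases a)
    case (real r)
    obtain n :: nat where "r \<le> real n" using real_arch_simple by blast
    then have "min a (ereal (real n)) = a" using real by simp
    then show ?thesis by (metis SUP_upper UNIV_I)
  next
    case PInf
    have "(\<infinity>::ennreal) = (SUP n::nat. of_nat n)" by (simp add: ennreal_SUP_of_nat_eq_top)
    also have "\<dots> \<le> (SUP n::nat. ennexp (min a (ereal (real n))))"
    proof (rule SUP_mono)
      fix n :: nat
      have "real n \<le> exp (real n)"
        using exp_ge_add_one_self[of "real n"] by linarith
      then have "of_nat n \<le> ennexp (min a (ereal (real n)))"
        using PInf by (simp add: ennreal_of_nat_eq_real_of_nat ennreal_leI)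
      then show "\<exists>m\<in>UNIV. of_nat n \<le> ennexp (min a (ereal (real m)))" by blast
    qed
    finally show ?thesis using PInf by (simp add: ennexp_def)
  next
    case MInf then show ?thesis by (simp add: ennexp_def)
  qed
qed

lemma nn_integral_ennexp_eq_SUP_min:
  assumes "sets M = sets borel" and [measurable]: "V \<in> borel_measurable borel"
  shows "(\<integral>\<^sup>+ x. ennexp (V x) \<partial>M) = (SUP n::nat. \<integral>\<^sup>+ x. ennexp (min (V x) (ereal (real n))) \<partial>M)"
proof -
  have "incseq (\<lambda>n x. ennexp (min (V x) (ereal (real n))))"
    by (auto simp: incseq_def le_fun_def intro!: ennexp_mono min.mono)
  moreover have "(\<lambda>x. ennexp (min (V x) (ereal (real n)))) \<in> borel_measurable M" for n
    unfolding measurable_cong_sets[OF assms(1) refl] by measurable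
  ultimately have "(\<integral>\<^sup>+ x. (SUP n. ennexp (min (V x) (ereal (real n)))) \<partial>M)
      = (SUP n. \<integral>\<^sup>+ x. ennexp (min (V x) (ereal (real n))) \<partial>M)"
    by (rule nn_integral_monotone_convergence_SUP)
  then show ?thesis by (simp add: SUP_ennexp_min_nat)
qed

lemma prob_space_symm_measure:
  fixes \<mu> :: "'a::euclidean_space measure"
  assumes "prob_space \<mu>" and "sets \<mu> = sets borel"
  shows "prob_space (symm_measure \<mu>)"
proof -
  have "prob_space (reflect_measure \<mu>)"
    unfolding reflect_measure_def
    by (rule prob_space.prob_space_distr[OF assms(1)])
       (simp add: measurable_cong_sets[OF assms(2) refl])
  then have "prob_space (\<mu> \<Otimes>\<^sub>M reflect_measure \<mu>)"
    by (rule prob_space_pair[OF assms(1)])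
  moreover have "sets (reflect_measure \<mu>) = sets borel"
    by (simp add: reflect_measure_def)
  then have "(\<lambda>(x, y). x + y) \<in> (\<mu> \<Otimes>\<^sub>M reflect_measure \<mu>) \<rightarrow>\<^sub>M (borel :: 'a measure)"
    using assms(2) by (simp cong: sets_pair_measure_cong)
  ultimately show ?thesis
    unfolding symm_measure_def conv_measure_def by (rule prob_space.prob_space_distr)
qed

lemma log_laplace_zero: "prob_space M \<Longrightarrow> log_laplace M 0 = 0"
  by (simp add: log_laplace_def prob_space.emeasure_space_1)

lemma log_laplace_neq_MInf: "log_laplace M y \<noteq> - \<infinity>"
  by (simp add: log_laplace_def Let_def)

lemma cramer_ge: "ereal (inner x y) - log_laplace M y \<le> cramer M x"
  unfolding cramer_def by (rule SUP_upper) simp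

lemma cramer_nonneg: "prob_space M \<Longrightarrow> 0 \<le> cramer M x"
  using cramer_ge[of x 0 M] by (simp add: log_laplace_zero zero_ereal_def)

lemma cramer_midpoint_convex:
  "2 * cramer M (x /\<^sub>R 2) \<le> cramer M (x - y) + cramer M y"
proof -
  let ?S = "cramer M (x - y) + cramer M y"
  have twice: "2 * (ereal (inner (x /\<^sub>R 2) z) - log_laplace M z) \<le> ?S" for z
  proof (cases "log_laplace M z")
    case (real l)
    then have "2 * (ereal (inner (x /\<^sub>R 2) z) - log_laplace M z)
        = (ereal (inner (x - y) z) - log_laplace M z) + (ereal (inner y z) - log_laplace M z)"
      by (simp add: inner_diff_left)
    also have "\<dots> \<le> ?S" by (intro add_mono cramer_ge)
    finally show ?thesis .
  qed (simp_all add: log_laplace_neq_MInf)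
  have "ereal (inner (x /\<^sub>R 2) z) - log_laplace M z \<le> ?S / 2" for z
    using twice[of z] by (intro ereal_le_divide_pos[THEN iffD2]) auto
  then have "cramer M (x /\<^sub>R 2) \<le> ?S / 2"
    unfolding cramer_def[of M "x /\<^sub>R 2"] by (rule SUP_least)
  then show ?thesis
    by (rule ereal_le_divide_pos[THEN iffD1, rotated 2]) auto
qed

lemma borel_measurable_cramer [measurable]: "cramer M \<in> borel_measurable borel"
proof (rule borel_measurableI_greater)
  fix c :: ereal
  have "open {x. c < ereal (inner x y) - log_laplace M y}" for y
  proof (cases "log_laplace M y")
    case (real l)
    have "open {x. c < ereal (inner x y - l)}"
      by (rule open_Collect_less) (intro continuous_intros)+
    with real show ?thesis by simp
  qed (simp_all add: log_laplace_neq_MInf)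
  moreover have "{x \<in> space borel. c < cramer M x} =
      (\<Union>y. {x. c < ereal (inner x y) - log_laplace M y})"
    by (auto simp: cramer_def less_SUP_iff)
  ultimately show "{x \<in> space borel. c < cramer M x} \<in> sets borel"
    by (simp add: borel_open open_UN)
qed

lemma property_tau_truncated_self:
  assumes "property_tau M W"
    and W_nonneg: "\<And>x. 0 \<le> W x" and [measurable]: "W \<in> borel_measurable borel"
    and V_le: "\<And>x y. V x \<le> W (x - y) + W y"
  shows "(\<integral>\<^sup>+ x. ennexp (min (V x) (ereal (real n))) \<partial>M) * (\<integral>\<^sup>+ x. ennexp (- W x) \<partial>M) \<le> 1"
proof -
  define f where "f x = real_of_ereal (min (W x) (ereal (real n)))" for x
  have f_eq: "ereal (f x) = min (W x) (ereal (real n))" for x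
    using W_nonneg[of x] unfolding f_def by (cases "W x") (auto simp: min_def)
  have "f \<in> borel_measurable borel"
    unfolding f_def by measurable
  moreover have "bounded (range f)"
  proof -
    have "\<bar>f x\<bar> \<le> real n" for x
      using f_eq[of x] W_nonneg[of x] by (cases "W x") (auto split: if_splits simp: min_def)
    then show ?thesis unfolding bounded_iff by auto
  qed
  ultimately have tau: "(\<integral>\<^sup>+ x. ennexp (inf_conv W f x) \<partial>M) * (\<integral>\<^sup>+ x. ennreal (exp (- f x)) \<partial>M) \<le> 1"
    using assms(1) unfolding property_tau_def by blast
  have "min (V x) (ereal (real n)) \<le> inf_conv W f x" for x
    unfolding inf_conv_def
  proof (rule INF_greatest)
    fix y
    show "min (V x) (ereal (real n)) \<le> W (x - y) + ereal (f y)"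
    proof (cases "W y \<le> ereal (real n)")
      case True
      then show ?thesis using f_eq[of y] V_le[of x y] by (simp add: min.coboundedI1)
    next
      case False
      then show ?thesis using f_eq[of y] W_nonneg[of "x - y"]
        by (simp add: min.coboundedI2 add_increasing)
    qed
  qed
  then have "(\<integral>\<^sup>+ x. ennexp (min (V x) (ereal (real n))) \<partial>M) \<le> (\<integral>\<^sup>+ x. ennexp (inf_conv W f x) \<partial>M)"
    by (intro nn_integral_mono ennexp_mono)
  moreover have "- W x \<le> ereal (- f x)" for x
    using f_eq[of x] by (metis ereal_minus_le_minus min.cobounded1 uminus_ereal.simps(1))
  then have "(\<integral>\<^sup>+ x. ennexp (- W x) \<partial>M) \<le> (\<integral>\<^sup>+ x. ennreal (exp (- f x)) \<partial>M)"
    by (intro nn_integral_mono) (metis ennexp_ereal ennexp_mono)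
  ultimately show ?thesis
    using tau by (meson mult_mono order_trans zero_le)
qed

lemma property_tau_self:
  assumes tau: "property_tau M W" and sets_M: "sets M = sets borel"
    and W_nonneg: "\<And>x. 0 \<le> W x" and W_meas: "W \<in> borel_measurable borel"
    and V_meas: "V \<in> borel_measurable borel" and V_le: "\<And>x y. V x \<le> W (x - y) + W y"
  shows "(\<integral>\<^sup>+ x. ennexp (V x) \<partial>M) * (\<integral>\<^sup>+ x. ennexp (- W x) \<partial>M) \<le> 1"
proof -
  have "(\<integral>\<^sup>+ x. ennexp (V x) \<partial>M) * (\<integral>\<^sup>+ x. ennexp (- W x) \<partial>M)
      = (SUP n::nat. (\<integral>\<^sup>+ x. ennexp (min (V x) (ereal (real n))) \<partial>M) * (\<integral>\<^sup>+ x. ennexp (- W x) \<partial>M))"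
    unfolding nn_integral_ennexp_eq_SUP_min[OF sets_M V_meas] by (rule SUP_mult_right_ennreal)
  also have "\<dots> \<le> 1"
    by (rule SUP_least, rule property_tau_truncated_self[OF tau W_nonneg W_meas V_le])
  finally show ?thesis .
qed

theorem lemma2:
  fixes \<mu> :: "'a::euclidean_space measure"
  assumes "prob_space \<mu>" and "sets \<mu> = sets borel"
    and "IC 1 \<mu>"
  shows "(\<integral>\<^sup>+ x. ennexp (2 * cramer (symm_measure \<mu>) (x /\<^sub>R 2)) \<partial>\<mu>)
           * (\<integral>\<^sup>+ x. ennexp (- cramer (symm_measure \<mu>) x) \<partial>\<mu>) \<le> 1"
proof (rule property_tau_self)
  show "property_tau \<mu> (cramer (symm_measure \<mu>))"
    using assms(3) by (simp add: IC_def)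
  show "0 \<le> cramer (symm_measure \<mu>) x" for x
    by (rule cramer_nonneg[OF prob_space_symm_measure[OF assms(1,2)]])
  show "(\<lambda>x. 2 * cramer (symm_measure \<mu>) (x /\<^sub>R 2)) \<in> borel_measurable borel"
    by measurable
  show "2 * cramer (symm_measure \<mu>) (x /\<^sub>R 2)
      \<le> cramer (symm_measure \<mu>) (x - y) + cramer (symm_measure \<mu>) y" for x y
    by (rule cramer_midpoint_convex)
qed (simp_all add: assms(2))

end
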